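(* Let $T$ be a session type with $\Delta\vdash T:\mathsf{s}^m$ satisfying the standing assumptions below. If $\llbracket T\rrbracket\xrightarrow{\alpha}p$ in the BPA labelled transition system over $\mathcal{E}_T$, then $p=\llbracket T'\rrbracket$ for some session type $T'$ with $T\xrightarrow{\alpha}T'$ in the session-type labelled transition system.
   Context: Session types: $T ::= \mathsf{Skip} \mid {!}B \mid {?}B \mid \oplus\{\ell:T_\ell\}_{\ell\in L} \mid \&\{\ell:T_\ell\}_{\ell\in L} \mid T;T \mid \mu a{:}\kappa.T \mid a$, with kinding: $\mathsf{Skip}:\mathsf{s}^{\mathsf{un}}$; ${!}B,{?}B:\mathsf{s}^{\mathsf{lin}}$ for message types $B$; choices $:\mathsf{s}^{\mathsf{lin}}$ when all branches are; $T;U:\mathsf{s}^{\mathsf{lin}}$ when both are; $\mu a{:}\kappa.T:\kappa$ when $T$ contractive on $a$ and $\Delta,a{:}\kappa\vdash T:\kappa$; variables by lookup in $\Delta$; subsumption. Terminated: $\mathsf{Skip}$; $T;U$ iff both terminated; $\mu a.T$ iff $T$ terminated. Contractive on $a$: $T\neq a$, for $T=U;V$, $U$ contractive on $a$ and if $U$ terminated then $V$ contractive on $a$; for $T=\mu b.T'$, $T'$ contractive on $a$. Standing assumptions: every $\mu$-bound variable occurs free in its body; bound variables are distinct. Session-type LTS: ${!}B\xrightarrow{!B}\mathsf{Skip}$, ${?}B\xrightarrow{?B}\mathsf{Skip}$, $\star\{\ell:T_\ell\}_{\ell\in L}\xrightarrow{\star k}T_k$ ($k\in L$), $b\xrightarrow{b}\mathsf{Skip}$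 for a free variable $b$; $\mu a.T\xrightarrow{\alpha}T'$ if $T[\mu a.T/a]\xrightarrow{\alpha}T'$; $T;U\xrightarrow{\alpha}T';U$ if $T\xrightarrow{\alpha}T'$; $T;U\xrightarrow{\alpha}U'$ if $T$ is terminated and $U\xrightarrow{\alpha}U'$. BPA processes $p ::= \alpha \mid X \mid p+p \mid p\cdot p \mid \varepsilon$ with LTS over equations $\mathcal E$: $\alpha\xrightarrow{\alpha}\varepsilon$; $p+q\xrightarrow{\alpha}p'$ if $p\xrightarrow{\alpha}p'$ (and symmetrically for $q$); $p\cdot q\xrightarrow{\alpha}p'\cdot q$ if $p\xrightarrow{\alpha}p'\neq\varepsilon$; $p\cdot q\xrightarrow{\alpha}q$ if $p\xrightarrow{\alpha}\varepsilon$; $X\xrightarrow{\alpha}p'$ if $X\triangleq p\in\mathcal E$ and $p\xrightarrow{\alpha}p'$. Operator $\odot$: $p\odot\varepsilon=p$, $\varepsilon\odot q=q$, else $p\cdot q$. Translation (each $\mu$-subterm $\mu a_i.T_i$ of $T$ gets a distinct variable $X_i$): $\llbracket\mathsf{Skip}\rrbracket=\varepsilon$, $\llbracket\sharp B\rrbracket=\sharp B$, $\llbracket\star\{\ell:T_\ell\}\rrbracket=\sum_\ell\star\ell\odot\llbracket T_\ell\rrbracket$, $\llbracket T;U\rrbracket=\llbracket T\rrbracket\odot\llbracket U\rrbracket$, $\llbracket b\rrbracket=b$ for free $b$, $\llbracket a_i\rrbracket=\llbracket\mu a_i.T_i\rrbracket=X_i$. Unravel: $\mathrm{unr}_\sigma(T;U)=\mathrm{unr}_\sigma(U)$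 if $\mathrm{unr}_\sigma(T)=\mathsf{Skip}$, else $\mathrm{unr}_\sigma(T);U$; $\mathrm{unr}_\sigma(\mu a.T)=\mathrm{unr}_{\sigma\circ[\mu a.T/a]}(T)$; $\mathrm{unr}_\sigma(T)=T$ otherwise. Equations: $\mathcal{E}_T=\{X_i\triangleq\llbracket\mathrm{unr}_{\mathrm{id}}(T_i)\rrbracket\}_i$. *)

theory Defs
  imports Main
begin

text \<open>Polarity: Out stands for ! (messages) and the internal choice (oplus);
  In stands for ? (messages) and the external choice (&).\<close>
datatype pol = Out | In

datatype mult = MUn | MLin

datatype ('b, 'l, 'v) stype =
    Skip
  | Msg pol 'b
  | Choice pol "('l \<times> ('b, 'l, 'v) stype) list"
  | SSeq "('b, 'l, 'v) stype" "('b, 'l, 'v) stype"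
  | Mu 'v mult "('b, 'l, 'v) stype"
  | TVar 'v

definition mult_le :: "mult \<Rightarrow> mult \<Rightarrow> bool" where
  "mult_le m m' \<longleftrightarrow> m = m' \<or> (m = MUn \<and> m' = MLin)"

fun terminated :: "('b, 'l, 'v) stype \<Rightarrow> bool" where
  "terminated Skip = True"
| "terminated (SSeq T U) = (terminated T \<and> terminated U)"
| "terminated (Mu a k T) = terminated T"
| "terminated _ = False"

fun contractive :: "'v \<Rightarrow> ('b, 'l, 'v) stype \<Rightarrow> bool" where
  "contractive a (TVar b) = (b \<noteq> a)"
| "contractive a (SSeq U V) = (contractive a U \<and> (terminated U \<longrightarrow> contractive a V))"
| "contractive a (Mu b k T) = contractive a T"
| "contractive a _ = True"

inductive kinding :: "('v \<Rightarrow> mult option) \<Rightarrow> ('b, 'l, 'v) stype \<Rightarrow> mult \<Rightarrow> bool" where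
  k_skip: "kinding \<Delta> Skip MUn"
| k_msg: "kinding \<Delta> (Msg p B) MLin"
| k_choice: "(\<forall>lU \<in> set bs. kinding \<Delta> (snd lU) MLin) \<Longrightarrow> kinding \<Delta> (Choice p bs) MLin"
| k_seq: "kinding \<Delta> T MLin \<Longrightarrow> kinding \<Delta> U MLin \<Longrightarrow> kinding \<Delta> (SSeq T U) MLin"
| k_mu: "contractive a T \<Longrightarrow> kinding (\<Delta>(a \<mapsto> k)) T k \<Longrightarrow> kinding \<Delta> (Mu a k T) k"
| k_var: "\<Delta> a = Some k \<Longrightarrow> kinding \<Delta> (TVar a) k"
| k_sub: "kinding \<Delta> T k \<Longrightarrow> mult_le k k' \<Longrightarrow> kinding \<Delta> T k'"

fun fvs :: "('b, 'l, 'v) stype \<Rightarrow> 'v set" where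
  "fvs (TVar a) = {a}"
| "fvs (SSeq T U) = fvs T \<union> fvs U"
| "fvs (Mu a k T) = fvs T - {a}"
| "fvs (Choice p bs) = (\<Union>lU \<in> set bs. fvs (snd lU))"
| "fvs _ = {}"

fun bvs :: "('b, 'l, 'v) stype \<Rightarrow> 'v list" where
  "bvs (SSeq T U) = bvs T @ bvs U"
| "bvs (Mu a k T) = a # bvs T"
| "bvs (Choice p bs) = concat (map (\<lambda>lU. bvs (snd lU)) bs)"
| "bvs _ = []"

text \<open>Standing assumption: every mu-bound variable occurs free in its body.\<close>
fun mu_occurs :: "('b, 'l, 'v) stype \<Rightarrow> bool" where
  "mu_occurs (SSeq T U) = (mu_occurs T \<and> mu_occurs U)"
| "mu_occurs (Mu a k T) = (a \<in> fvs T \<and> mu_occurs T)"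
| "mu_occurs (Choice p bs) = (\<forall>lU \<in> set bs. mu_occurs (snd lU))"
| "mu_occurs _ = True"

text \<open>Standing assumption (Barendregt convention): bound variables are pairwise
  distinct and distinct from the free variables.\<close>
definition bv_distinct :: "('b, 'l, 'v) stype \<Rightarrow> bool" where
  "bv_distinct T \<longleftrightarrow> distinct (bvs T) \<and> set (bvs T) \<inter> fvs T = {}"

text \<open>Simultaneous substitution (naive; capture is excluded by the standing
  assumptions).\<close>
fun ssubst :: "('v \<Rightarrow> ('b, 'l, 'v) stype) \<Rightarrow> ('b, 'l, 'v) stype \<Rightarrow> ('b, 'l, 'v) stype" where
  "ssubst \<sigma> (TVar a) = \<sigma> a"
| "ssubst \<sigma> (SSeq T U) = SSeq (ssubst \<sigma> T) (ssubst \<sigma> U)"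
| "ssubst \<sigma> (Mu a k T) = Mu a k (ssubst (\<sigma>(a := TVar a)) T)"
| "ssubst \<sigma> (Choice p bs) = Choice p (map (\<lambda>(l, U). (l, ssubst \<sigma> U)) bs)"
| "ssubst \<sigma> Skip = Skip"
| "ssubst \<sigma> (Msg p B) = Msg p B"

text \<open>T[S/a]\<close>
definition subst1 :: "('b, 'l, 'v) stype \<Rightarrow> 'v \<Rightarrow> ('b, 'l, 'v) stype \<Rightarrow> ('b, 'l, 'v) stype" where
  "subst1 S a T = ssubst (TVar(a := S)) T"

datatype ('b, 'l, 'v) act = AMsg pol 'b | AChoice pol 'l | AVar 'v

inductive st_step :: "('b, 'l, 'v) stype \<Rightarrow> ('b, 'l, 'v) act \<Rightarrow> ('b, 'l, 'v) stype \<Rightarrow> bool" where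
  st_msg: "st_step (Msg p B) (AMsg p B) Skip"
| st_choice: "(k, Tk) \<in> set bs \<Longrightarrow> st_step (Choice p bs) (AChoice p k) Tk"
| st_var: "st_step (TVar b) (AVar b) Skip"
| st_mu: "st_step (subst1 (Mu a k T) a T) \<alpha> T' \<Longrightarrow> st_step (Mu a k T) \<alpha> T'"
| st_seq1: "st_step T \<alpha> T' \<Longrightarrow> st_step (SSeq T U) \<alpha> (SSeq T' U)"
| st_seq2: "terminated T \<Longrightarrow> st_step U \<alpha> U' \<Longrightarrow> st_step (SSeq T U) \<alpha> U'"

text \<open>Process variables X_i are named by the bound variable a_i of the corresponding
  mu-subterm (bound variables are distinct).  Sums are n-ary: p + q is PSum [p, q].\<close>
datatype ('b, 'l, 'v) bpa =
    PAct "('b, 'l, 'v) act"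
  | PVar 'v
  | PSum "('b, 'l, 'v) bpa list"
  | PSeq "('b, 'l, 'v) bpa" "('b, 'l, 'v) bpa"
  | Eps

inductive bpa_step :: "('v \<times> ('b, 'l, 'v) bpa) set \<Rightarrow> ('b, 'l, 'v) bpa \<Rightarrow> ('b, 'l, 'v) act \<Rightarrow> ('b, 'l, 'v) bpa \<Rightarrow> bool"
  for E where
  b_act: "bpa_step E (PAct \<alpha>) \<alpha> Eps"
| b_sum: "p \<in> set ps \<Longrightarrow> bpa_step E p \<alpha> p' \<Longrightarrow> bpa_step E (PSum ps) \<alpha> p'"
| b_seq1: "bpa_step E p \<alpha> p' \<Longrightarrow> p' \<noteq> Eps \<Longrightarrow> bpa_step E (PSeq p q) \<alpha> (PSeq p' q)"
| b_seq2: "bpa_step E p \<alpha> Eps \<Longrightarrow> bpa_step E (PSeq p q) \<alpha> q"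
| b_var: "(X, p) \<in> E \<Longrightarrow> bpa_step E p \<alpha> p' \<Longrightarrow> bpa_step E (PVar X) \<alpha> p'"

definition odot :: "('b, 'l, 'v) bpa \<Rightarrow> ('b, 'l, 'v) bpa \<Rightarrow> ('b, 'l, 'v) bpa" where
  "odot p q = (if q = Eps then p else if p = Eps then q else PSeq p q)"

text \<open>Translation, relative to the set S of mu-bound variables of the original type T
  (variables in S are the a_i, translated to X_i; others are free).\<close>
fun tr :: "'v set \<Rightarrow> ('b, 'l, 'v) stype \<Rightarrow> ('b, 'l, 'v) bpa" where
  "tr S Skip = Eps"
| "tr S (Msg p B) = PAct (AMsg p B)"
| "tr S (Choice p bs) = PSum (map (\<lambda>(l, U). odot (PAct (AChoice p l)) (tr S U)) bs)"
| "tr S (SSeq T U) = odot (tr S T) (tr S U)"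
| "tr S (TVar b) = (if b \<in> S then PVar b else PAct (AVar b))"
| "tr S (Mu a k T) = PVar a"

fun unr :: "('v \<Rightarrow> ('b, 'l, 'v) stype) \<Rightarrow> ('b, 'l, 'v) stype \<Rightarrow> ('b, 'l, 'v) stype" where
  "unr \<sigma> (SSeq T U) = (if unr \<sigma> T = Skip then unr \<sigma> U else SSeq (unr \<sigma> T) U)"
| "unr \<sigma> (Mu a k T) = unr (\<lambda>x. ssubst \<sigma> ((TVar(a := Mu a k T)) x)) T"
| "unr \<sigma> T = T"

fun mu_subterms :: "('b, 'l, 'v) stype \<Rightarrow> ('v \<times> mult \<times> ('b, 'l, 'v) stype) set" where
  "mu_subterms (SSeq T U) = mu_subterms T \<union> mu_subterms U"
| "mu_subterms (Mu a k T) = insert (a, k, T) (mu_subterms T)"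
| "mu_subterms (Choice p bs) = (\<Union>lU \<in> set bs. mu_subterms (snd lU))"
| "mu_subterms _ = {}"

definition eqs :: "('b, 'l, 'v) stype \<Rightarrow> ('v \<times> ('b, 'l, 'v) bpa) set" where
  "eqs T = {(a, tr (set (bvs T)) (unr TVar U)) | a k U. (a, k, U) \<in> mu_subterms T}"

end

theory Submission
  imports Defs
begin

(* The translation cannot see unfoldings: a bound variable a and its mu-subterm mu a.U are
   both translated to X_a. Every type reached from T is an instance sigma(Y) of a subterm Y,
   where sigma replaces bound variables by closed unfoldings of their mu-subterms, and sigma(Y)
   translates exactly like Y. So it suffices to match every BPA step of [[Y]], and of the
   equation body [[unr Y]], by a session step of sigma(Y). This goes by induction on the height
   of the BPA derivation, which decreases when X_a is replaced by its equation (whose right-hand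
   side is not a subterm of [[Y]]), and inside it on Y. Distinctness of the binders makes the
   equation for X_a unique and rules out variable capture when a mu is unfolded. *)

lemma stype_branch_induct[case_names Skip Msg Choice SSeq Mu TVar]:
  assumes "P Skip" "\<And>p B. P (Msg p B)"
    "\<And>p bs. (\<And>l U. (l, U) \<in> set bs \<Longrightarrow> P U) \<Longrightarrow> P (Choice p bs)"
    "\<And>T U. P T \<Longrightarrow> P U \<Longrightarrow> P (SSeq T U)" "\<And>a k T. P T \<Longrightarrow> P (Mu a k T)" "\<And>a. P (TVar a)"
  shows "P T"
proof (induction T)
  case (Choice p bs)
  show ?case
  proof (rule assms(3))
    fix l U assume "(l, U) \<in> set bs"
    then show "P U" using Choice.IH[of "(l, U)" U] by simp
  qed
qed (use assms in auto)

lemma fvs_Choice_branch: "(l, U) \<in> set bs \<Longrightarrow> fvs U \<subseteq> fvs (Choice p bs)"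
  by (auto intro!: bexI[where x="(l, U)"])

lemma bvs_Choice_branch: "(l, U) \<in> set bs \<Longrightarrow> set (bvs U) \<subseteq> set (bvs (Choice p bs))"
  by (auto intro!: bexI[where x="(l, U)"])

subsection \<open>Substitution\<close>

lemma ssubst_cong: "(\<And>x. x \<in> fvs Z \<Longrightarrow> \<sigma> x = \<tau> x) \<Longrightarrow> ssubst \<sigma> Z = ssubst \<tau> Z"
proof (induction Z arbitrary: \<sigma> \<tau> rule: stype_branch_induct)
  case (Choice p bs)
  have "ssubst \<sigma> U = ssubst \<tau> U" if "(l, U) \<in> set bs" for l U
    by (rule Choice.IH[OF that]) (use Choice.prems fvs_Choice_branch[OF that] in blast)
  then show ?case by (auto split: prod.splits)
next
  case (Mu a k T)
  have "ssubst (\<sigma>(a := TVar a)) T = ssubst (\<tau>(a := TVar a)) T"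
    by (rule Mu.IH) (use Mu.prems in auto)
  then show ?case by simp
next
  case (SSeq T U)
  have "ssubst \<sigma> T = ssubst \<tau> T" "ssubst \<sigma> U = ssubst \<tau> U"
    by (rule SSeq.IH; use SSeq.prems in auto)+
  then show ?case by simp
qed auto

lemma ssubst_TVar: "ssubst TVar Z = Z"
proof (induction Z rule: stype_branch_induct)
  case (Choice p bs)
  then show ?case by (auto split: prod.splits intro!: map_idI)
qed auto

lemma ssubst_trivial: "(\<And>x. x \<in> fvs Z \<Longrightarrow> \<sigma> x = TVar x) \<Longrightarrow> ssubst \<sigma> Z = Z"
  using ssubst_cong[of Z \<sigma> TVar] ssubst_TVar by metis

lemma fvs_ssubst: "fvs (ssubst \<sigma> Z) \<subseteq> (\<Union>x\<in>fvs Z. fvs (\<sigma> x))"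
proof (induction Z arbitrary: \<sigma> rule: stype_branch_induct)
  case (Choice p bs)
  have "fvs (ssubst \<sigma> U) \<subseteq> (\<Union>x\<in>fvs (Choice p bs). fvs (\<sigma> x))" if "(l, U) \<in> set bs" for l U
    using Choice.IH[OF that, of \<sigma>] fvs_Choice_branch[OF that] by blast
  then show ?case by (force split: prod.splits)
next
  case (Mu a k T)
  have "fvs (ssubst (\<sigma>(a := TVar a)) T) \<subseteq> (\<Union>x\<in>fvs T. fvs ((\<sigma>(a := TVar a)) x))"
    by (rule Mu.IH)
  then show ?case by (auto split: if_splits)
next
  case (SSeq T U)
  have "fvs (ssubst \<sigma> T) \<subseteq> (\<Union>x\<in>fvs T. fvs (\<sigma> x))" "fvs (ssubst \<sigma> U) \<subseteq> (\<Union>x\<in>fvs U. fvs (\<sigma> x))"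
    by (rule SSeq.IH)+
  then show ?case by auto
qed auto

lemma ssubst_ssubst:
  assumes "\<forall>b \<in> set (bvs Z). \<forall>x. x \<noteq> b \<longrightarrow> b \<notin> fvs (\<sigma> x)"
  shows "ssubst \<tau> (ssubst \<sigma> Z) = ssubst (\<lambda>x. ssubst \<tau> (\<sigma> x)) Z"
  using assms
proof (induction Z arbitrary: \<sigma> \<tau> rule: stype_branch_induct)
  case (Choice p bs)
  have "ssubst \<tau> (ssubst \<sigma> U) = ssubst (\<lambda>x. ssubst \<tau> (\<sigma> x)) U" if "(l, U) \<in> set bs" for l U
    by (rule Choice.IH[OF that]) (use Choice.prems bvs_Choice_branch[OF that] in blast)
  then show ?case by (auto split: prod.splits)
next
  case (Mu a k T)
  have IH: "ssubst (\<tau>(a := TVar a)) (ssubst (\<sigma>(a := TVar a)) T)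
      = ssubst (\<lambda>x. ssubst (\<tau>(a := TVar a)) ((\<sigma>(a := TVar a)) x)) T"
    by (rule Mu.IH) (use Mu.prems in auto)
  have "(\<lambda>x. ssubst (\<tau>(a := TVar a)) ((\<sigma>(a := TVar a)) x)) = (\<lambda>x. ssubst \<tau> (\<sigma> x))(a := TVar a)"
  proof
    fix x
    show "ssubst (\<tau>(a := TVar a)) ((\<sigma>(a := TVar a)) x) = ((\<lambda>x. ssubst \<tau> (\<sigma> x))(a := TVar a)) x"
      using Mu.prems by (cases "x = a") (auto intro!: ssubst_cong)
  qed
  then show ?case using IH by (simp only: ssubst.simps)
qed auto

lemma subst1_ssubst_fun_upd:
  assumes "d \<notin> set (bvs X)"
    and "\<forall>b \<in> set (bvs X). \<forall>x. x \<noteq> b \<longrightarrow> b \<notin> fvs (\<sigma> x)"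
    and "\<forall>x. x \<noteq> d \<longrightarrow> d \<notin> fvs (\<sigma> x)"
  shows "subst1 M d (ssubst (\<sigma>(d := TVar d)) X) = ssubst (\<sigma>(d := M)) X"
proof -
  have "subst1 M d (ssubst (\<sigma>(d := TVar d)) X) = ssubst (\<lambda>x. subst1 M d ((\<sigma>(d := TVar d)) x)) X"
    unfolding subst1_def using assms(1,2) by (intro ssubst_ssubst) auto
  also have "(\<lambda>x. subst1 M d ((\<sigma>(d := TVar d)) x)) = \<sigma>(d := M)"
  proof
    fix x
    show "subst1 M d ((\<sigma>(d := TVar d)) x) = (\<sigma>(d := M)) x"
      using assms(3) by (cases "x = d") (auto simp: subst1_def intro!: ssubst_trivial)
  qed
  finally show ?thesis .
qed

lemma terminated_ssubst: "terminated Z \<Longrightarrow> terminated (ssubst \<sigma> Z)"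
  by (induction Z arbitrary: \<sigma> rule: stype_branch_induct) auto

lemma tr_ssubst: "(\<And>x. x \<in> fvs Z \<Longrightarrow> tr S (\<sigma> x) = tr S (TVar x)) \<Longrightarrow> tr S (ssubst \<sigma> Z) = tr S Z"
proof (induction Z rule: stype_branch_induct)
  case (Choice p bs)
  have "tr S (ssubst \<sigma> U) = tr S U" if "(l, U) \<in> set bs" for l U
    by (rule Choice.IH[OF that]) (use Choice.prems fvs_Choice_branch[OF that] in blast)
  then show ?case by (auto split: prod.splits)
next
  case (TVar x)
  then show ?case by (simp del: tr.simps(5))
qed auto

lemma tr_Eps_terminated: "tr S Z = Eps \<Longrightarrow> terminated Z"
  by (induction Z rule: stype_branch_induct) (auto simp: odot_def split: if_splits)

lemma unr_indep: "unr \<sigma> Z = unr \<tau> Z"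
proof (induction \<sigma> Z arbitrary: \<tau> rule: unr.induct)
  case (1 \<sigma> T U)
  have "unr \<sigma> T = unr \<tau> T" by (rule "1.IH"(1))
  moreover have "unr \<sigma> U = unr \<tau> U" if "unr \<sigma> T = Skip" by (rule "1.IH"(2)[OF that])
  ultimately show ?case by simp
next
  case (2 \<sigma> a k T)
  show ?case by (simp only: unr.simps) (rule "2.IH")
qed simp_all

lemma unr_Mu: "unr \<sigma> (Mu a k T) = unr \<sigma> T"
  using unr_indep by (metis unr.simps(2))

lemma unr_Skip_terminated: "unr \<sigma> Z = Skip \<Longrightarrow> terminated Z"
proof (induction \<sigma> Z rule: unr.induct)
  case (1 \<sigma> T U)
  then show ?case by (cases "unr \<sigma> T = Skip") auto
qed auto

lemma tr_unr_Eps: "tr S (unr \<sigma> Z) = Eps \<Longrightarrow> unr \<sigma> Z = Skip"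
proof (induction \<sigma> Z rule: unr.induct)
  case (1 \<sigma> T U)
  then show ?case by (cases "unr \<sigma> T = Skip") (auto simp: odot_def split: if_splits)
qed (auto split: if_splits)

subsection \<open>Bound variables and mu-subterms\<close>

fun mu_list :: "('b, 'l, 'v) stype \<Rightarrow> ('v \<times> mult \<times> ('b, 'l, 'v) stype) list" where
  "mu_list (SSeq T U) = mu_list T @ mu_list U"
| "mu_list (Mu a k T) = (a, k, T) # mu_list T"
| "mu_list (Choice p bs) = concat (map (\<lambda>lU. mu_list (snd lU)) bs)"
| "mu_list _ = []"

lemma set_mu_list: "set (mu_list Y) = mu_subterms Y"
  by (induction Y rule: mu_list.induct) auto

lemma map_fst_mu_list: "map fst (mu_list Y) = bvs Y"
proof (induction Y rule: stype_branch_induct)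
  case (Choice p bs)
  have "map fst (mu_list (snd lU)) = bvs (snd lU)" if "lU \<in> set bs" for lU
    using Choice.IH[of "fst lU" "snd lU"] that by simp
  then show ?case by (simp add: map_concat comp_def cong: map_cong)
qed auto

lemma set_bvs_mu_subterms: "set (bvs Y) = fst ` mu_subterms Y"
  unfolding map_fst_mu_list[symmetric] set_mu_list[symmetric] by simp

lemma mu_subterms_mono: "(d, k, X) \<in> mu_subterms Y \<Longrightarrow> mu_subterms X \<subseteq> mu_subterms Y"
  by (induction Y rule: stype_branch_induct) force+

lemma mu_subterm_bvs: "(d, k, X) \<in> mu_subterms Y \<Longrightarrow> d \<in> set (bvs Y)"
  by (force simp: set_bvs_mu_subterms)

lemma mu_subterm_bvs_subset: "(d, k, X) \<in> mu_subterms Y \<Longrightarrow> set (bvs X) \<subseteq> set (bvs Y)"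
  using mu_subterms_mono by (fastforce simp: set_bvs_mu_subterms)

lemma distinct_bvs_Choice_branch: "distinct (bvs (Choice p bs)) \<Longrightarrow> (l, U) \<in> set bs \<Longrightarrow> distinct (bvs U)"
  by (force simp: distinct_concat_iff)

lemma mu_subterm_not_rebound:
  "distinct (bvs Y) \<Longrightarrow> (d, k, X) \<in> mu_subterms Y \<Longrightarrow> d \<notin> set (bvs X)"
proof (induction Y rule: stype_branch_induct)
  case (Choice p bs)
  then obtain l U where "(l, U) \<in> set bs" "(d, k, X) \<in> mu_subterms U" by force
  then show ?case using Choice.IH distinct_bvs_Choice_branch[OF Choice.prems(1)] by blast
next
  case (SSeq T U)
  then show ?case using mu_subterms_mono[of d k X T] mu_subterms_mono[of d k X U]
    by (auto simp: set_bvs_mu_subterms)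
next
  case (Mu a k' T)
  then show ?case by (auto simp: set_bvs_mu_subterms)
qed auto

lemma mu_subterms_unique:
  assumes "distinct (bvs Y)" "(d, k, X) \<in> mu_subterms Y" "(d, k', X') \<in> mu_subterms Y"
  shows "k = k' \<and> X = X'"
proof -
  have "inj_on fst (mu_subterms Y)"
    using assms(1) distinct_map[of fst "mu_list Y"] by (simp add: map_fst_mu_list set_mu_list)
  then have "(d, k, X) = (d, k', X')" by (rule inj_onD) (simp_all add: assms(2,3))
  then show ?thesis by simp
qed

subsection \<open>Step-indexed BPA transitions\<close>

inductive bpa_stepn :: "('v \<times> ('b, 'l, 'v) bpa) set \<Rightarrow> nat \<Rightarrow> ('b, 'l, 'v) bpa \<Rightarrow> ('b, 'l, 'v) act \<Rightarrow> ('b, 'l, 'v) bpa \<Rightarrow> bool"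
  for E where
  n_act: "bpa_stepn E (Suc n) (PAct \<alpha>) \<alpha> Eps"
| n_sum: "p \<in> set ps \<Longrightarrow> bpa_stepn E n p \<alpha> p' \<Longrightarrow> bpa_stepn E (Suc n) (PSum ps) \<alpha> p'"
| n_seq1: "bpa_stepn E n p \<alpha> p' \<Longrightarrow> p' \<noteq> Eps \<Longrightarrow> bpa_stepn E (Suc n) (PSeq p q) \<alpha> (PSeq p' q)"
| n_seq2: "bpa_stepn E n p \<alpha> Eps \<Longrightarrow> bpa_stepn E (Suc n) (PSeq p q) \<alpha> q"
| n_var: "(X, p) \<in> E \<Longrightarrow> bpa_stepn E n p \<alpha> p' \<Longrightarrow> bpa_stepn E (Suc n) (PVar X) \<alpha> p'"

inductive_cases bpa_stepn_EpsE: "bpa_stepn E n Eps \<alpha> p"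
inductive_cases bpa_stepn_PActE: "bpa_stepn E n (PAct a) \<alpha> p"
inductive_cases bpa_stepn_PSumE: "bpa_stepn E n (PSum ps) \<alpha> p"
inductive_cases bpa_stepn_PSeqE: "bpa_stepn E n (PSeq q r) \<alpha> p"
inductive_cases bpa_stepn_PVarE: "bpa_stepn E n (PVar X) \<alpha> p"

lemma bpa_stepn_Suc: "bpa_stepn E n q \<alpha> p \<Longrightarrow> bpa_stepn E (Suc n) q \<alpha> p"
  by (induction rule: bpa_stepn.induct) (auto intro: bpa_stepn.intros)

lemma bpa_stepn_mono: "bpa_stepn E m q \<alpha> p \<Longrightarrow> m \<le> n \<Longrightarrow> bpa_stepn E n q \<alpha> p"
  by (induction n) (auto simp: le_Suc_eq intro: bpa_stepn_Suc)

lemma bpa_step_imp_stepn: "bpa_step E q \<alpha> p \<Longrightarrow> \<exists>n. bpa_stepn E n q \<alpha> p"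
  by (induction rule: bpa_step.induct) (auto intro: bpa_stepn.intros)

lemma odot_Eps [simp]: "odot p Eps = p" "odot Eps p = p"
  by (auto simp: odot_def)

lemma bpa_stepn_odot_PAct: "bpa_stepn E n (odot (PAct c) q) \<alpha> p \<Longrightarrow> \<alpha> = c \<and> p = q"
  by (auto simp: odot_def elim!: bpa_stepn_PActE bpa_stepn_PSeqE split: if_splits)

lemma bpa_stepn_tr_Choice:
  assumes "bpa_stepn E n (tr S (Choice q bs)) \<alpha> p"
  shows "\<exists>l U. (l, U) \<in> set bs \<and> \<alpha> = AChoice q l \<and> p = tr S U"
  using assms by (fastforce elim!: bpa_stepn_PSumE dest!: bpa_stepn_odot_PAct)

definition steps_match ::
  "('v \<times> ('b, 'l, 'v) bpa) set \<Rightarrow> 'v set \<Rightarrow> nat \<Rightarrow> ('b, 'l, 'v) bpa \<Rightarrow> ('b, 'l, 'v) stype \<Rightarrow> bool" where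
  "steps_match E S n q Z \<longleftrightarrow>
     (\<forall>\<alpha> p. bpa_stepn E n q \<alpha> p \<longrightarrow> (\<exists>Z'. p = tr S Z' \<and> st_step Z \<alpha> Z'))"

lemma steps_match_mono: "steps_match E S n q Z \<Longrightarrow> m \<le> n \<Longrightarrow> steps_match E S m q Z"
  unfolding steps_match_def using bpa_stepn_mono by blast

lemma steps_match_Eps: "steps_match E S n Eps Z"
  unfolding steps_match_def by (auto elim: bpa_stepn_EpsE)

lemma steps_match_SSeq_terminated:
  "terminated Z1 \<Longrightarrow> steps_match E S n q Z2 \<Longrightarrow> steps_match E S n q (SSeq Z1 Z2)"
  unfolding steps_match_def by (blast intro: st_seq2)

lemma steps_match_SSeq:
  assumes match: "steps_match E S n q Z1" and "q \<noteq> Eps"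
  shows "steps_match E S n (odot q (tr S Z2)) (SSeq Z1 Z2)"
  unfolding steps_match_def
proof (intro allI impI)
  fix \<alpha> p
  assume step: "bpa_stepn E n (odot q (tr S Z2)) \<alpha> p"
  show "\<exists>Z'. p = tr S Z' \<and> st_step (SSeq Z1 Z2) \<alpha> Z'"
  proof (cases "tr S Z2 = Eps")
    case True
    then obtain Z' where "p = tr S Z'" "st_step Z1 \<alpha> Z'"
      using step match unfolding steps_match_def by auto
    then show ?thesis using True by (intro exI[of _ "SSeq Z' Z2"]) (auto intro: st_seq1)
  next
    case False
    then have "bpa_stepn E n (PSeq q (tr S Z2)) \<alpha> p"
      using step \<open>q \<noteq> Eps\<close> by (simp add: odot_def)
    then obtain m q' where "bpa_stepn E m q \<alpha> q'" "m \<le> n" and p: "p = odot q' (tr S Z2)"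
      by (rule bpa_stepn_PSeqE) (use False in \<open>auto simp: odot_def\<close>)
    then obtain Z' where "q' = tr S Z'" "st_step Z1 \<alpha> Z'"
      using steps_match_mono[OF match] unfolding steps_match_def by blast
    then show ?thesis using p by (intro exI[of _ "SSeq Z' Z2"]) (auto intro: st_seq1)
  qed
qed

lemma steps_match_Msg: "steps_match E S n (tr S (Msg q B)) (Msg q B)"
  unfolding steps_match_def by (auto elim!: bpa_stepn_PActE intro!: exI[of _ Skip] st_msg)

lemma steps_match_free_TVar: "x \<notin> S \<Longrightarrow> steps_match E S n (PAct (AVar x)) (TVar x)"
  unfolding steps_match_def by (auto elim!: bpa_stepn_PActE intro!: exI[of _ Skip] st_var)

lemma steps_match_Choice:
  assumes "\<And>U. tr S (ssubst \<sigma> U) = tr S U"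
  shows "steps_match E S n (tr S (Choice q bs)) (ssubst \<sigma> (Choice q bs))"
  unfolding steps_match_def
proof (intro allI impI)
  fix \<alpha> p
  assume "bpa_stepn E n (tr S (Choice q bs)) \<alpha> p"
  then obtain l U where "(l, U) \<in> set bs" "\<alpha> = AChoice q l" "p = tr S U"
    using bpa_stepn_tr_Choice by blast
  then have "st_step (ssubst \<sigma> (Choice q bs)) \<alpha> (ssubst \<sigma> U)" and "p = tr S (ssubst \<sigma> U)"
    using assms by (force intro: st_choice)+
  then show "\<exists>Z'. p = tr S Z' \<and> st_step (ssubst \<sigma> (Choice q bs)) \<alpha> Z'" by blast
qed

subsection \<open>Closing substitutions\<close>

definition instantiates :: "'v set \<Rightarrow> ('v \<Rightarrow> ('b, 'l, 'v) stype) \<Rightarrow> ('b, 'l, 'v) stype \<Rightarrow> bool" where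
  "instantiates S \<sigma> Y \<longleftrightarrow> (\<forall>x \<in> fvs Y \<inter> S. \<sigma> x \<noteq> TVar x)"

lemma instantiates_SSeq:
  "instantiates S \<sigma> (SSeq Y1 Y2) \<longleftrightarrow> instantiates S \<sigma> Y1 \<and> instantiates S \<sigma> Y2"
  unfolding instantiates_def by auto

lemma instantiates_Mu_body:
  "instantiates S \<sigma> (Mu d k X) \<Longrightarrow> instantiates S (\<sigma>(d := ssubst \<sigma> (Mu d k X))) X"
  unfolding instantiates_def by auto

lemma fvs_ssubst_disjoint:
  assumes "\<And>x. \<sigma> x = TVar x \<or> fvs (\<sigma> x) \<inter> S = {}" and "instantiates S \<sigma> Y"
  shows "fvs (ssubst \<sigma> Y) \<inter> S = {}"
  using fvs_ssubst[of \<sigma> Y] assms unfolding instantiates_def by fastforce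

locale distinct_binders =
  fixes T0 :: "('b, 'l, 'v) stype"
  assumes distinct_bvs: "distinct (bvs T0)"
begin

abbreviation bound :: "'v set" where
  "bound \<equiv> set (bvs T0)"

text \<open>The substitutions met while unfolding \<open>T0\<close>: every bound variable is either left alone
  or replaced by the closed unfolding of its own \<open>\<mu>\<close>-subterm.\<close>
inductive closure_subst :: "('v \<Rightarrow> ('b, 'l, 'v) stype) \<Rightarrow> bool" where
  closure_subst_TVar: "closure_subst TVar"
| closure_subst_upd: "closure_subst \<sigma> \<Longrightarrow> (d, k, X) \<in> mu_subterms T0 \<Longrightarrow>
    instantiates bound \<sigma> (Mu d k X) \<Longrightarrow> closure_subst (\<sigma>(d := ssubst \<sigma> (Mu d k X)))"

lemma closure_subst_cases:
  "closure_subst \<sigma> \<Longrightarrow> \<sigma> x = TVar x \<or> (\<exists>\<sigma>' k X. closure_subst \<sigma>' \<and> (x, k, X) \<in> mu_subterms T0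
     \<and> instantiates bound \<sigma>' (Mu x k X) \<and> \<sigma> x = ssubst \<sigma>' (Mu x k X))"
  by (induction rule: closure_subst.induct) auto

lemma closure_subst_closed: "closure_subst \<sigma> \<Longrightarrow> \<sigma> x = TVar x \<or> fvs (\<sigma> x) \<inter> bound = {}"
proof (induction arbitrary: x rule: closure_subst.induct)
  case (closure_subst_upd \<sigma> d k X)
  then show ?case using fvs_ssubst_disjoint[of \<sigma> bound "Mu d k X"] by auto
qed simp

lemma closure_subst_fresh: "closure_subst \<sigma> \<Longrightarrow> b \<in> bound \<Longrightarrow> x \<noteq> b \<Longrightarrow> b \<notin> fvs (\<sigma> x)"
  using closure_subst_closed[of \<sigma> x] by auto

lemma closure_subst_free: "closure_subst \<sigma> \<Longrightarrow> x \<notin> bound \<Longrightarrow> \<sigma> x = TVar x"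
  using closure_subst_cases[of \<sigma> x] by (auto dest: mu_subterm_bvs)

lemma tr_closure_subst: "closure_subst \<sigma> \<Longrightarrow> tr bound (\<sigma> x) = tr bound (TVar x)"
  using closure_subst_cases[of \<sigma> x] by (auto dest: mu_subterm_bvs)

lemma tr_ssubst_closure: "closure_subst \<sigma> \<Longrightarrow> tr bound (ssubst \<sigma> Z) = tr bound Z"
  by (rule tr_ssubst) (rule tr_closure_subst)

text \<open>Unfolding \<open>\<mu>d. \<sigma>(X)\<close> substitutes the closure for \<open>d\<close>, which amounts to extending
  \<open>\<sigma>\<close> by \<open>d \<mapsto> \<sigma>(\<mu>d. X)\<close>.\<close>
lemma steps_match_unfold:
  assumes \<sigma>: "closure_subst \<sigma>" and dkX: "(d, k, X) \<in> mu_subterms T0"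
    and match: "steps_match E S n q (ssubst (\<sigma>(d := ssubst \<sigma> (Mu d k X))) X)"
  shows "steps_match E S n q (ssubst \<sigma> (Mu d k X))"
proof -
  have "subst1 (ssubst \<sigma> (Mu d k X)) d (ssubst (\<sigma>(d := TVar d)) X)
      = ssubst (\<sigma>(d := ssubst \<sigma> (Mu d k X))) X"
  proof (rule subst1_ssubst_fun_upd)
    show "d \<notin> set (bvs X)" using mu_subterm_not_rebound[OF distinct_bvs dkX] .
    show "\<forall>b \<in> set (bvs X). \<forall>x. x \<noteq> b \<longrightarrow> b \<notin> fvs (\<sigma> x)"
      using mu_subterm_bvs_subset[OF dkX] closure_subst_fresh[OF \<sigma>] by blast
    show "\<forall>x. x \<noteq> d \<longrightarrow> d \<notin> fvs (\<sigma> x)"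
      using mu_subterm_bvs[OF dkX] closure_subst_fresh[OF \<sigma>] by blast
  qed
  then have "st_step (ssubst \<sigma> (Mu d k X)) \<alpha> Z'"
    if "st_step (ssubst (\<sigma>(d := ssubst \<sigma> (Mu d k X))) X) \<alpha> Z'" for \<alpha> Z'
    using that st_mu[of d k "ssubst (\<sigma>(d := TVar d)) X"] by simp
  then show ?thesis using match unfolding steps_match_def by blast
qed

lemma eqs_PVar_stepn:
  assumes "(d, k, X) \<in> mu_subterms T0" and "bpa_stepn (eqs T0) n (PVar d) \<alpha> p"
  shows "\<exists>m < n. bpa_stepn (eqs T0) m (tr bound (unr TVar X)) \<alpha> p"
proof -
  obtain m r where "n = Suc m" "(d, r) \<in> eqs T0" "bpa_stepn (eqs T0) m r \<alpha> p"
    using assms(2) by (rule bpa_stepn_PVarE)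
  moreover have "r = tr bound (unr TVar X)"
    using \<open>(d, r) \<in> eqs T0\<close> assms(1) mu_subterms_unique[OF distinct_bvs] unfolding eqs_def by fastforce
  ultimately show ?thesis by blast
qed

lemma steps_match_bound_TVar:
  assumes \<sigma>: "closure_subst \<sigma>" and "instantiates bound \<sigma> (TVar x)" and "x \<in> bound"
    and below: "\<And>m \<sigma>' Y. m < n \<Longrightarrow> closure_subst \<sigma>' \<Longrightarrow> mu_subterms Y \<subseteq> mu_subterms T0 \<Longrightarrow>
      instantiates bound \<sigma>' Y \<Longrightarrow> steps_match (eqs T0) bound m (tr bound (unr TVar Y)) (ssubst \<sigma>' Y)"
  shows "steps_match (eqs T0) bound n (PVar x) (\<sigma> x)"
  unfolding steps_match_def
proof (intro allI impI)
  fix \<alpha> p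
  assume var_step: "bpa_stepn (eqs T0) n (PVar x) \<alpha> p"
  have "\<sigma> x \<noteq> TVar x" using assms(2,3) unfolding instantiates_def by simp
  then obtain \<sigma>' k X where \<sigma>': "closure_subst \<sigma>'" and dkX: "(x, k, X) \<in> mu_subterms T0"
    and inst: "instantiates bound \<sigma>' (Mu x k X)" and \<sigma>x: "\<sigma> x = ssubst \<sigma>' (Mu x k X)"
    using closure_subst_cases[OF \<sigma>, of x] by blast
  obtain m where "m < n" and step: "bpa_stepn (eqs T0) m (tr bound (unr TVar X)) \<alpha> p"
    using eqs_PVar_stepn[OF dkX var_step] by blast
  have "mu_subterms (Mu x k X) \<subseteq> mu_subterms T0" using mu_subterms_mono[OF dkX] dkX by simp
  then have "steps_match (eqs T0) bound m (tr bound (unr TVar (Mu x k X))) (ssubst \<sigma>' (Mu x k X))"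
    using \<open>m < n\<close> \<sigma>' inst below by blast
  then have "steps_match (eqs T0) bound m (tr bound (unr TVar X)) (\<sigma> x)"
    unfolding \<sigma>x unr_Mu .
  then show "\<exists>Z'. p = tr bound Z' \<and> st_step (\<sigma> x) \<alpha> Z'" using step unfolding steps_match_def by blast
qed

lemma tr_unr_steps_match:
  "closure_subst \<sigma> \<Longrightarrow> mu_subterms Y \<subseteq> mu_subterms T0 \<Longrightarrow> instantiates bound \<sigma> Y \<Longrightarrow>
    steps_match (eqs T0) bound n (tr bound (unr TVar Y)) (ssubst \<sigma> Y)"
proof (induction n arbitrary: \<sigma> Y rule: less_induct)
  case (less n)
  from less.prems show ?case
  proof (induction Y arbitrary: \<sigma> rule: stype_branch_induct)
    case Skip
    then show ?case by (simp add: steps_match_Eps)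
  next
    case (Msg q B)
    then show ?case using steps_match_Msg by simp
  next
    case (Choice q bs)
    then show ?case using steps_match_Choice[OF tr_ssubst_closure] by simp
  next
    case (SSeq Y1 Y2)
    have \<sigma>: "closure_subst \<sigma>" and sub: "mu_subterms Y1 \<subseteq> mu_subterms T0" "mu_subterms Y2 \<subseteq> mu_subterms T0"
      and inst: "instantiates bound \<sigma> Y1" "instantiates bound \<sigma> Y2"
      using SSeq.prems by (auto simp: instantiates_SSeq)
    show ?case
    proof (cases "unr TVar Y1 = Skip")
      case True
      then have "terminated (ssubst \<sigma> Y1)" by (intro terminated_ssubst unr_Skip_terminated)
      then show ?thesis
        using True steps_match_SSeq_terminated SSeq.IH(2)[OF \<sigma> sub(2) inst(2)] by simp
    next
      case False
      then have "tr bound (unr TVar Y1) \<noteq> Eps" using tr_unr_Eps by blast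
      then show ?thesis
        using False steps_match_SSeq[OF SSeq.IH(1)[OF \<sigma> sub(1) inst(1)], of "ssubst \<sigma> Y2"]
        by (simp add: tr_ssubst_closure[OF \<sigma>])
    qed
  next
    case (Mu d k X)
    have dkX: "(d, k, X) \<in> mu_subterms T0" using Mu.prems(2) by simp
    have "closure_subst (\<sigma>(d := ssubst \<sigma> (Mu d k X)))"
      using Mu.prems(1) dkX Mu.prems(3) by (rule closure_subst_upd)
    moreover have "mu_subterms X \<subseteq> mu_subterms T0" using Mu.prems(2) by simp
    ultimately have "steps_match (eqs T0) bound n (tr bound (unr TVar X))
        (ssubst (\<sigma>(d := ssubst \<sigma> (Mu d k X))) X)"
      using instantiates_Mu_body[OF Mu.prems(3)] by (rule Mu.IH)
    then show ?case unfolding unr_Mu by (rule steps_match_unfold[OF Mu.prems(1) dkX])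
  next
    case (TVar x)
    show ?case
    proof (cases "x \<in> bound")
      case True
      have "steps_match (eqs T0) bound n (PVar x) (\<sigma> x)"
        using TVar.prems(1,3) True less.IH by (rule steps_match_bound_TVar)
      then show ?thesis using True by simp
    next
      case False
      then show ?thesis
        using steps_match_free_TVar[OF False] closure_subst_free[OF TVar.prems(1) False] by simp
    qed
  qed
qed

lemma tr_steps_match:
  "closure_subst \<sigma> \<Longrightarrow> mu_subterms Y \<subseteq> mu_subterms T0 \<Longrightarrow> instantiates bound \<sigma> Y \<Longrightarrow>
    steps_match (eqs T0) bound n (tr bound Y) (ssubst \<sigma> Y)"
proof (induction Y rule: stype_branch_induct)
  case (SSeq Y1 Y2)
  have \<sigma>: "closure_subst \<sigma>" and sub: "mu_subterms Y1 \<subseteq> mu_subterms T0" "mu_subterms Y2 \<subseteq> mu_subterms T0"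
    and inst: "instantiates bound \<sigma> Y1" "instantiates bound \<sigma> Y2"
    using SSeq.prems by (auto simp: instantiates_SSeq)
  show ?case
  proof (cases "tr bound Y1 = Eps")
    case True
    then have "terminated (ssubst \<sigma> Y1)" by (intro terminated_ssubst tr_Eps_terminated)
    then show ?thesis using True steps_match_SSeq_terminated SSeq.IH(2)[OF \<sigma> sub(2) inst(2)] by simp
  next
    case False
    then show ?thesis
      using steps_match_SSeq[OF SSeq.IH(1)[OF \<sigma> sub(1) inst(1)] False, of "ssubst \<sigma> Y2"]
      by (simp add: tr_ssubst_closure[OF \<sigma>])
  qed
next
  case (Mu d k X)
  have dkX: "(d, k, X) \<in> mu_subterms T0" using Mu.prems(2) by simp
  show ?case unfolding steps_match_def
  proof (intro allI impI)
    fix \<alpha> p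
    assume "bpa_stepn (eqs T0) n (tr bound (Mu d k X)) \<alpha> p"
    then obtain m where "bpa_stepn (eqs T0) m (tr bound (unr TVar X)) \<alpha> p"
      using eqs_PVar_stepn[OF dkX, of n \<alpha> p] by auto
    then show "\<exists>Z'. p = tr bound Z' \<and> st_step (ssubst \<sigma> (Mu d k X)) \<alpha> Z'"
      using tr_unr_steps_match[OF Mu.prems, unfolded unr_Mu] unfolding steps_match_def by blast
  qed
next
  case Skip
  then show ?case using tr_unr_steps_match[OF Skip.prems] by simp
next
  case (Msg q B)
  then show ?case using tr_unr_steps_match[OF Msg.prems] by simp
next
  case (Choice q bs)
  then show ?case using tr_unr_steps_match[OF Choice.prems] by simp
next
  case (TVar x)
  then show ?case using tr_unr_steps_match[OF TVar.prems] by simp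
qed

end

theorem mainTheorem5:
  fixes T :: "('b, 'l, 'v) stype" and \<Delta> :: "'v \<Rightarrow> mult option"
    and \<alpha> :: "('b, 'l, 'v) act" and p :: "('b, 'l, 'v) bpa"
  assumes "kinding \<Delta> T m"
    and "mu_occurs T"
    and "bv_distinct T"
    and "bpa_step (eqs T) (tr (set (bvs T)) T) \<alpha> p"
  shows "\<exists>T'. p = tr (set (bvs T)) T' \<and> st_step T \<alpha> T'"
proof -
  interpret distinct_binders T
    using assms(3) by unfold_locales (simp add: bv_distinct_def)
  obtain n where "bpa_stepn (eqs T) n (tr (set (bvs T)) T) \<alpha> p"
    using bpa_step_imp_stepn[OF assms(4)] by blast
  moreover have "instantiates (set (bvs T)) TVar T"
    using assms(3) unfolding bv_distinct_def instantiates_def by auto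
  then have "steps_match (eqs T) (set (bvs T)) n (tr (set (bvs T)) T) T"
    using tr_steps_match[OF closure_subst_TVar subset_refl] by (simp add: ssubst_TVar)
  ultimately show ?thesis unfolding steps_match_def by blast
qed

end
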